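(* Let $A,B$ be two sets of size $r$, and let $\sigma:A\to B$ be a uniformly random bijection. Let $A_1,\dots,A_k\subseteq A'\subseteq A$ and $B_1,\dots,B_k\subseteq B'\subseteq B$. Then the function $$t\mapsto P\left[\bigwedge_{i=1}^k\left[\sigma(A_i)\neq B_i\right]\ \Bigm|\ |\sigma(A')\setminus B'|=t\right]$$ is nondecreasing in $t$ (over those $t$ for which the conditioning event has nonzero probability).
   Context: $\sigma(A_i)$ denotes the image set $\{\sigma(a):a\in A_i\}$. *)

theory Defs
  imports "HOL-Probability.Probability"
begin

text \<open>The bijections from A to B, as functions extensional on A (so each bijection
  is represented exactly once).\<close>
definition bijections :: "'a set \<Rightarrow> 'b set \<Rightarrow> ('a \<Rightarrow> 'b) set" where
  "bijections A B = {\<sigma> \<in> extensional A. bij_betw \<sigma> A B}"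

definition unif_bij :: "'a set \<Rightarrow> 'b set \<Rightarrow> ('a \<Rightarrow> 'b) pmf" where
  "unif_bij A B = pmf_of_set (bijections A B)"

definition cond_prob :: "'c pmf \<Rightarrow> 'c set \<Rightarrow> 'c set \<Rightarrow> real" where
  "cond_prob p E C = measure_pmf.prob p (E \<inter> C) / measure_pmf.prob p C"

end

theory Submission
  imports Defs
begin

text \<open>
  A bijection \<sigma> induces the partial matching M = {(x, \<sigma> x) | x \<in> A', \<sigma> x \<in> B'} between A' and B',
  which has |A'| - |\<sigma>(A') - B'| edges. The event that \<sigma>(A_i) \<noteq> B_i for all i depends on \<sigma>
  only through M, and as a property of matchings it is inherited by submatchings. Every matching
  of a given size is the matched part of equally many bijections, so conditioned on
  |\<sigma>(A') - B'| = t the matching M is uniform among the matchings of size |A'| - t. It remains to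
  see that the proportion of matchings of size m with a property closed under submatchings does
  not increase with m. This follows by double counting the pairs R \<subseteq> R' of matchings of sizes
  m and m + 1: every R has (|A'| - m)(|B'| - m) extensions and every R' has m + 1 restrictions.
\<close>

lemma card_eq_mult_card_if_uniform_fibres:
  assumes "finite X" "finite Y" "f ` X \<subseteq> Y" "\<And>y. y \<in> Y \<Longrightarrow> card {x \<in> X. f x = y} = c"
  shows "card X = c * card Y"
proof -
  have "X = (\<Union>y\<in>Y. {x \<in> X. f x = y})" using assms(3) by auto
  also have "card \<dots> = (\<Sum>y\<in>Y. card {x \<in> X. f x = y})"
    using assms(1,2) by (intro card_UN_disjoint) auto
  finally have "card X = (\<Sum>y\<in>Y. card {x \<in> X. f x = y})" .
  then show ?thesis using assms(4) by simp
qed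

lemma card_inj_funcset:
  assumes "finite S" "finite T"
  shows "card {f \<in> S \<rightarrow>\<^sub>E T. inj_on f S} = (\<Prod>i<card S. card T - i)"
  using card_inj_on_subset_funcset[OF assms order.refl] by (simp add: atLeast0LessThan)

lemma card_injective_extensions:
  assumes "finite X" "finite Z" "X0 \<subseteq> X" "\<tau> ` X0 \<subseteq> Y" "inj_on \<tau> X0" "Z \<subseteq> Y"
    "\<tau> ` X0 \<inter> Z = {}"
  shows "card {g \<in> X \<rightarrow>\<^sub>E Y. inj_on g X \<and> (\<forall>x\<in>X0. g x = \<tau> x) \<and> g ` (X - X0) \<subseteq> Z}
         = (\<Prod>i<card (X - X0). card Z - i)"
proof -
  let ?G = "{g \<in> X \<rightarrow>\<^sub>E Y. inj_on g X \<and> (\<forall>x\<in>X0. g x = \<tau> x) \<and> g ` (X - X0) \<subseteq> Z}"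
  let ?H = "{h \<in> (X - X0) \<rightarrow>\<^sub>E Z. inj_on h (X - X0)}"
  let ?extend = "\<lambda>h x. if x \<in> X0 then \<tau> x else h x"
  have "bij_betw (\<lambda>g. restrict g (X - X0)) ?G ?H"
  proof (rule bij_betw_byWitness[where f'="?extend"])
    show "\<forall>g\<in>?G. ?extend (restrict g (X - X0)) = g"
      using assms(3) by (auto simp: PiE_def extensional_def fun_eq_iff)
    show "\<forall>h\<in>?H. restrict (?extend h) (X - X0) = h"
      by (auto simp: PiE_def extensional_def fun_eq_iff)
    show "(\<lambda>g. restrict g (X - X0)) ` ?G \<subseteq> ?H"
      by (auto simp: inj_on_def)
    show "?extend ` ?H \<subseteq> ?G"
    proof
      fix g assume "g \<in> ?extend ` ?H"
      then obtain h where h: "h \<in> (X - X0) \<rightarrow>\<^sub>E Z" "inj_on h (X - X0)" and g: "g = ?extend h"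
        by blast
      have "h ` (X - X0) \<inter> \<tau> ` X0 = {}" using h(1) assms(7) by auto
      then have "inj_on g (X0 \<union> (X - X0))"
        unfolding g using h(2) assms(5) by (subst inj_on_Un) (auto simp: inj_on_def)
      moreover have "X0 \<union> (X - X0) = X" using assms(3) by blast
      moreover have "g \<in> X \<rightarrow>\<^sub>E Y"
        using h(1) assms(3,4,6)
        by (auto simp: g PiE_def extensional_def Pi_def image_subset_iff subset_iff)
      ultimately show "g \<in> ?G" using h(1) by (auto simp: g)
    qed
  qed
  then have "card ?G = card ?H" by (rule bij_betw_same_card)
  also have "\<dots> = (\<Prod>i<card (X - X0). card Z - i)"
    using assms(1,2) by (simp add: card_inj_funcset)
  finally show ?thesis .
qed

lemma card_inj_extensions:
  assumes "finite X" "finite Y" "X1 \<subseteq> X" "g \<in> X1 \<rightarrow>\<^sub>E Y" "inj_on g X1"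
  shows "card {f \<in> X \<rightarrow>\<^sub>E Y. inj_on f X \<and> restrict f X1 = g}
         = (\<Prod>i<card (X - X1). card Y - card X1 - i)"
proof -
  have gY: "g ` X1 \<subseteq> Y" and g_ext: "g \<in> extensional X1" using assms(4) by (auto simp: PiE_def)
  let ?E = "{f \<in> X \<rightarrow>\<^sub>E Y. inj_on f X \<and> restrict f X1 = g}"
  let ?E' = "{f \<in> X \<rightarrow>\<^sub>E Y. inj_on f X \<and> (\<forall>x\<in>X1. f x = g x) \<and> f ` (X - X1) \<subseteq> Y - g ` X1}"
  have "?E = ?E'"
  proof (intro equalityI subsetI)
    fix f assume f: "f \<in> ?E"
    then have agree: "\<forall>x\<in>X1. f x = g x" and inj_f: "inj_on f X" and fXY: "f ` X \<subseteq> Y"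
      by (auto simp: PiE_def Pi_def)
    have "f ` (X - X1) \<inter> f ` X1 = f ` ((X - X1) \<inter> X1)"
      using inj_f assms(3) by (intro inj_on_image_Int[symmetric]) auto
    then have "f ` (X - X1) \<subseteq> Y - f ` X1" using fXY by auto
    moreover have "f ` X1 = g ` X1" using agree by simp
    ultimately show "f \<in> ?E'" using f agree by simp
  next
    fix f assume f: "f \<in> ?E'"
    then have "restrict f X1 = restrict g X1" by (intro restrict_ext) simp
    then have "restrict f X1 = g" using extensional_restrict[OF g_ext] by simp
    then show "f \<in> ?E" using f by simp
  qed
  also have "card \<dots> = (\<Prod>i<card (X - X1). card (Y - g ` X1) - i)"
    using assms(1,2,3,5) gY by (intro card_injective_extensions) auto
  also have "card (Y - g ` X1) = card Y - card X1"
    using gY assms(2,5) by (simp add: card_Diff_subset card_image finite_subset)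
  finally show ?thesis .
qed

lemma card_injective_extensions_two_stage:
  assumes "finite X" "finite Y" "X0 \<subseteq> X1" "X1 \<subseteq> X" "\<tau> ` X0 \<subseteq> Y" "inj_on \<tau> X0"
    "Z \<subseteq> Y" "\<tau> ` X0 \<inter> Z = {}"
  shows "card {f \<in> X \<rightarrow>\<^sub>E Y. inj_on f X \<and> (\<forall>x\<in>X0. f x = \<tau> x) \<and> f ` (X1 - X0) \<subseteq> Z}
         = (\<Prod>i<card (X - X1). card Y - card X1 - i) * (\<Prod>i<card (X1 - X0). card Z - i)"
proof -
  let ?F = "{f \<in> X \<rightarrow>\<^sub>E Y. inj_on f X \<and> (\<forall>x\<in>X0. f x = \<tau> x) \<and> f ` (X1 - X0) \<subseteq> Z}"
  let ?G = "{g \<in> X1 \<rightarrow>\<^sub>E Y. inj_on g X1 \<and> (\<forall>x\<in>X0. g x = \<tau> x) \<and> g ` (X1 - X0) \<subseteq> Z}"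
  have finX1: "finite X1" using assms(1,4) by (rule finite_subset[rotated])
  have fibre: "card {f \<in> ?F. restrict f X1 = g} = (\<Prod>i<card (X - X1). card Y - card X1 - i)"
    if g: "g \<in> ?G" for g
  proof -
    have "{f \<in> ?F. restrict f X1 = g} = {f \<in> X \<rightarrow>\<^sub>E Y. inj_on f X \<and> restrict f X1 = g}"
    proof -
      have "(\<forall>x\<in>X0. f x = \<tau> x) \<and> f ` (X1 - X0) \<subseteq> Z" if "restrict f X1 = g" for f
      proof -
        have "\<forall>x\<in>X1. f x = g x" using that by auto
        then show ?thesis using g assms(3) by auto
      qed
      then show ?thesis by blast
    qed
    then show ?thesis using g assms(1,2,4) by (simp add: card_inj_extensions)
  qed
  have "card ?F = (\<Prod>i<card (X - X1). card Y - card X1 - i) * card ?G"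
  proof (rule card_eq_mult_card_if_uniform_fibres[where f = "\<lambda>f. restrict f X1"])
    show "finite ?F"
      by (rule finite_subset[OF _ finite_PiE[OF assms(1), of "\<lambda>_. Y"]]) (use assms(2) in auto)
    show "finite ?G"
      by (rule finite_subset[OF _ finite_PiE[OF finX1, of "\<lambda>_. Y"]]) (use assms(2) in auto)
    show "(\<lambda>f. restrict f X1) ` ?F \<subseteq> ?G"
    proof
      fix h assume "h \<in> (\<lambda>f. restrict f X1) ` ?F"
      then obtain f where f: "f \<in> ?F" and h: "h = restrict f X1" by blast
      then show "h \<in> ?G"
        using assms(3,4) inj_on_subset[of f X X1] by (auto simp: PiE_def Pi_def)
    qed
  qed (rule fibre)
  also have "card ?G = (\<Prod>i<card (X1 - X0). card Z - i)"
    by (rule card_injective_extensions[OF finX1 finite_subset[OF assms(7,2)] assms(3,5,6,7,8)])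
  finally show ?thesis .
qed

lemma density_le_if_biregular_downward_closed:
  fixes rel :: "'a \<Rightarrow> 'a \<Rightarrow> bool"
  assumes "finite P" "finite Q" "Q \<noteq> {}"
    and deg_P: "\<And>p. p \<in> P \<Longrightarrow> card {q \<in> Q. rel p q} = c"
    and deg_Q: "\<And>q. q \<in> Q \<Longrightarrow> card {p \<in> P. rel p q} = d" and "d > 0"
    and down: "\<And>p q. p \<in> P \<Longrightarrow> q \<in> Q \<Longrightarrow> rel p q \<Longrightarrow> G q \<Longrightarrow> G p"
  shows "card {q \<in> Q. G q} / card Q \<le> card {p \<in> P. G p} / (card P :: real)"
proof -
  let ?GP = "{p \<in> P. G p}" and ?GQ = "{q \<in> Q. G q}"
  have "c * card P = (\<Sum>p\<in>P. card {q \<in> Q. rel p q})" using deg_P by simp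
  also have "\<dots> = d * card Q" using assms(1,2) deg_Q by (intro sum_multicount) auto
  finally have edges: "c * card P = d * card Q" .
  have "d * card ?GQ = (\<Sum>p\<in>?GP. card {q \<in> ?GQ. rel p q})"
  proof (rule sum_multicount[symmetric])
    show "\<forall>q\<in>?GQ. card {p \<in> ?GP. rel p q} = d"
    proof
      fix q assume q: "q \<in> ?GQ"
      then have "{p \<in> ?GP. rel p q} = {p \<in> P. rel p q}" using down by auto
      then show "card {p \<in> ?GP. rel p q} = d" using q deg_Q by simp
    qed
  qed (use assms(1,2) in auto)
  also have "\<dots> \<le> (\<Sum>p\<in>?GP. c)"
  proof (rule sum_mono)
    fix p assume "p \<in> ?GP"
    then show "card {q \<in> ?GQ. rel p q} \<le> c"
      using deg_P[of p] assms(2) by (auto intro!: card_mono)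
  qed
  finally have good_edges: "d * card ?GQ \<le> c * card ?GP" by (simp add: mult.commute)
  have "0 < d * card Q" using assms(2,3,6) by (simp add: card_gt_0_iff)
  then have "card P > 0" using edges by (metis gr0I mult_0_right)
  have "d * (card ?GQ * card P) \<le> d * (card ?GP * card Q)"
  proof -
    have "d * (card ?GQ * card P) = (d * card ?GQ) * card P" by simp
    also have "\<dots> \<le> (c * card ?GP) * card P" using good_edges by simp
    also have "\<dots> = card ?GP * (d * card Q)" using edges by (simp add: algebra_simps)
    finally show ?thesis by (simp add: algebra_simps)
  qed
  then have "card ?GQ * card P \<le> card ?GP * card Q" using \<open>d > 0\<close> by simp
  then have "real (card ?GQ) * real (card P) \<le> real (card ?GP) * real (card Q)"
    by (metis of_nat_le_iff of_nat_mult)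
  then show ?thesis using \<open>card P > 0\<close> assms(2,3) by (simp add: divide_simps card_gt_0_iff)
qed

definition partial_matchings :: "'a set \<Rightarrow> 'b set \<Rightarrow> nat \<Rightarrow> ('a \<times> 'b) set set" where
  "partial_matchings X Y m = {R. R \<subseteq> X \<times> Y \<and> inj_on fst R \<and> inj_on snd R \<and> card R = m}"

lemma finite_partial_matchings: "finite X \<Longrightarrow> finite Y \<Longrightarrow> finite (partial_matchings X Y m)"
  by (rule finite_subset[of _ "Pow (X \<times> Y)"]) (auto simp: partial_matchings_def)

lemma card_Domain_Range_partial_matching:
  assumes "R \<in> partial_matchings X Y m"
  shows "card (Domain R) = m" "card (Range R) = m"
  using assms by (simp_all flip: fst_eq_Domain snd_eq_Range add: partial_matchings_def card_image)

lemma card_sub_matchings: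
  assumes R': "R' \<in> partial_matchings X Y (Suc m)"
  shows "card {R \<in> partial_matchings X Y m. R \<subseteq> R'} = Suc m"
proof -
  have fin: "finite R'" and card_R': "card R' = Suc m"
    using R' by (auto simp: partial_matchings_def intro: card_ge_0_finite)
  have "{R \<in> partial_matchings X Y m. R \<subseteq> R'} = (\<lambda>p. R' - {p}) ` R'"
  proof (intro equalityI subsetI)
    fix R assume R: "R \<in> {R \<in> partial_matchings X Y m. R \<subseteq> R'}"
    then have "R \<noteq> R'" using card_R' by (auto simp: partial_matchings_def)
    then obtain p where p: "p \<in> R'" "p \<notin> R" using R by blast
    have "R \<subseteq> R' - {p}" "card (R' - {p}) = card R"
      using R p card_R' fin by (auto simp: partial_matchings_def)
    then have "R = R' - {p}" using fin by (simp add: card_subset_eq)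
    then show "R \<in> (\<lambda>p. R' - {p}) ` R'" using p by blast
  next
    fix R assume "R \<in> (\<lambda>p. R' - {p}) ` R'"
    then show "R \<in> {R \<in> partial_matchings X Y m. R \<subseteq> R'}"
      using R' fin by (auto simp: partial_matchings_def intro: inj_on_subset)
  qed
  moreover have "inj_on (\<lambda>p. R' - {p}) R'" by (auto simp: inj_on_def)
  ultimately show ?thesis using card_R' by (simp add: card_image)
qed

lemma super_matchings_eq_image_insert:
  assumes "finite X" "finite Y" and R: "R \<in> partial_matchings X Y m"
  shows "{R' \<in> partial_matchings X Y (Suc m). R \<subseteq> R'}
       = (\<lambda>p. insert p R) ` ((X - Domain R) \<times> (Y - Range R))"
proof -
  have R_XY: "R \<subseteq> X \<times> Y" and inj_fst: "inj_on fst R" and inj_snd: "inj_on snd R"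
    and card_R: "card R = m"
    using R by (auto simp: partial_matchings_def)
  have fin: "finite R" using R_XY assms(1,2) by (rule finite_subset[OF _ finite_cartesian_product])
  show ?thesis
  proof (intro equalityI subsetI)
    fix R' assume "R' \<in> {R' \<in> partial_matchings X Y (Suc m). R \<subseteq> R'}"
    then have R'_XY: "R' \<subseteq> X \<times> Y" and inj': "inj_on fst R'" "inj_on snd R'"
      and card_R': "card R' = Suc m" and sub: "R \<subseteq> R'"
      by (auto simp: partial_matchings_def)
    have "R \<noteq> R'" using card_R' card_R by auto
    then obtain p where p: "p \<in> R'" "p \<notin> R" using sub by blast
    have "insert p R \<subseteq> R'" "card (insert p R) = card R'"
      using p sub fin card_R card_R' by auto
    then have R'_eq: "R' = insert p R"
      using card_R' by (metis card_ge_0_finite card_subset_eq zero_less_Suc)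
    have "fst p \<notin> Domain R" "snd p \<notin> Range R"
      using inj' p unfolding R'_eq by (auto simp flip: fst_eq_Domain snd_eq_Range)
    then show "R' \<in> (\<lambda>p. insert p R) ` ((X - Domain R) \<times> (Y - Range R))"
      using R'_eq p R'_XY by (auto intro!: image_eqI[of _ _ p])
  next
    fix R' assume "R' \<in> (\<lambda>p. insert p R) ` ((X - Domain R) \<times> (Y - Range R))"
    then obtain p where p: "p \<in> (X - Domain R) \<times> (Y - Range R)" and R'_eq: "R' = insert p R"
      by blast
    have "p \<notin> R" using p by (auto intro: Domain.intros)
    moreover have "inj_on fst R'" "inj_on snd R'"
      using p inj_fst inj_snd \<open>p \<notin> R\<close> unfolding R'_eq
      by (auto simp: inj_on_insert fst_eq_Domain snd_eq_Range)
    ultimately show "R' \<in> {R' \<in> partial_matchings X Y (Suc m). R \<subseteq> R'}"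
      using p R_XY fin card_R unfolding R'_eq by (auto simp: partial_matchings_def)
  qed
qed

lemma card_super_matchings:
  assumes "finite X" "finite Y" and R: "R \<in> partial_matchings X Y m"
  shows "card {R' \<in> partial_matchings X Y (Suc m). R \<subseteq> R'} = (card X - m) * (card Y - m)"
proof -
  have "Domain R \<subseteq> X" "Range R \<subseteq> Y" using R by (auto simp: partial_matchings_def)
  then have "card (X - Domain R) = card X - m" "card (Y - Range R) = card Y - m"
    using card_Domain_Range_partial_matching[OF R] assms(1,2)
    by (simp_all add: card_Diff_subset finite_subset)
  moreover have "inj_on (\<lambda>p. insert p R) ((X - Domain R) \<times> (Y - Range R))"
    by (rule inj_onI) (auto simp: insert_ident Domain.intros)
  ultimately show ?thesis
    unfolding super_matchings_eq_image_insert[OF assms]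
    by (simp add: card_image card_cartesian_product)
qed

lemma matching_density_antimono:
  assumes "finite X" "finite Y" "m \<le> n" "partial_matchings X Y n \<noteq> {}"
    and down: "\<And>R R'. R \<subseteq> R' \<Longrightarrow> inj_on fst R' \<Longrightarrow> G R' \<Longrightarrow> G R"
  shows "card {R \<in> partial_matchings X Y n. G R} / card (partial_matchings X Y n)
       \<le> card {R \<in> partial_matchings X Y m. G R} / (card (partial_matchings X Y m) :: real)"
  using assms(3,4)
proof (induction n rule: dec_induct)
  case (step k)
  let ?density = "\<lambda>k. card {R \<in> partial_matchings X Y k. G R} / (card (partial_matchings X Y k) :: real)"
  obtain R' where "R' \<in> partial_matchings X Y (Suc k)" using step.prems by blast
  then have "card {R \<in> partial_matchings X Y k. R \<subseteq> R'} = Suc k" by (rule card_sub_matchings)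
  then have "{R \<in> partial_matchings X Y k. R \<subseteq> R'} \<noteq> {}" by (metis card.empty Zero_not_Suc)
  then have "partial_matchings X Y k \<noteq> {}" by blast
  then have "?density k \<le> ?density m" using step.IH by blast
  moreover have "?density (Suc k) \<le> ?density k"
  proof (rule density_le_if_biregular_downward_closed[where rel = "(\<subseteq>)"])
    show "finite (partial_matchings X Y k)" "finite (partial_matchings X Y (Suc k))"
      using assms(1,2) by (auto intro: finite_partial_matchings)
    show "partial_matchings X Y (Suc k) \<noteq> {}" by (fact step.prems)
    show "card {R' \<in> partial_matchings X Y (Suc k). R \<subseteq> R'} = (card X - k) * (card Y - k)"
      if "R \<in> partial_matchings X Y k" for R
      using card_super_matchings[OF assms(1,2) that] .
    show "card {R \<in> partial_matchings X Y k. R \<subseteq> R'} = Suc k"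
      if "R' \<in> partial_matchings X Y (Suc k)" for R'
      using card_sub_matchings[OF that] .
    show "G R" if "R \<subseteq> R'" "R' \<in> partial_matchings X Y (Suc k)" "G R'" for R R'
      using down[OF that(1) _ that(3)] that(2) by (simp add: partial_matchings_def)
  qed simp
  ultimately show ?case by linarith
qed simp

lemma bijections_eq_inj_funcset:
  assumes "finite A" "finite B" "card A = card B"
  shows "bijections A B = {f \<in> A \<rightarrow>\<^sub>E B. inj_on f A}"
proof (intro equalityI subsetI)
  fix f assume "f \<in> bijections A B"
  then show "f \<in> {f \<in> A \<rightarrow>\<^sub>E B. inj_on f A}"
    by (auto simp: bijections_def bij_betw_def PiE_def Pi_def)
next
  fix f assume f: "f \<in> {f \<in> A \<rightarrow>\<^sub>E B. inj_on f A}"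
  then have "f ` A \<subseteq> B" "card (f ` A) = card B" using assms(3) by (auto simp: card_image)
  then have "f ` A = B" using assms(2) by (simp add: card_subset_eq)
  then show "f \<in> bijections A B" using f by (simp add: bijections_def bij_betw_def PiE_def)
qed

lemma finite_bijections: "finite A \<Longrightarrow> finite B \<Longrightarrow> finite (bijections A B)"
  by (rule finite_subset[OF _ finite_PiE[of A "\<lambda>_. B"]])
    (auto simp: bijections_def bij_betw_def PiE_def)

lemma bijections_nonempty:
  assumes "finite A" "finite B" "card A = card B"
  shows "bijections A B \<noteq> {}"
proof -
  obtain h where "bij_betw h A B" using finite_same_card_bij[OF assms] by blast
  then have "restrict h A \<in> bijections A B" by (simp add: bijections_def)
  then show ?thesis by blast
qed

lemma bijection_exists_if_prob_pos:
  assumes "finite A" "finite B" "card A = card B" "measure_pmf.prob (unif_bij A B) E > 0"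
  shows "\<exists>\<sigma>\<in>bijections A B. \<sigma> \<in> E"
  using measure_pmf_zero_iff[of "unif_bij A B" E] assms
  by (auto simp: unif_bij_def finite_bijections bijections_nonempty)

lemma cond_prob_pmf_of_set:
  assumes "finite S" "S \<noteq> {}"
  shows "cond_prob (pmf_of_set S) E C = card (S \<inter> E \<inter> C) / card (S \<inter> C)"
  using assms by (simp add: cond_prob_def measure_pmf_of_set Int_assoc card_gt_0_iff)

lemma card_image_Diff_le: "finite S \<Longrightarrow> card (f ` S - T) \<le> card S"
  by (meson Diff_subset card_image_le card_mono finite_imageI order_trans)

definition matched_part :: "'a set \<Rightarrow> 'b set \<Rightarrow> ('a \<Rightarrow> 'b) \<Rightarrow> ('a \<times> 'b) set" where
  "matched_part A' B' \<sigma> = {(x, \<sigma> x) | x. x \<in> A' \<and> \<sigma> x \<in> B'}"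

text \<open>For R the matched part of \<sigma>, this says \<sigma>(A_i) \<noteq> B_i for all i
  (see image_eq_iff_matched_part).\<close>

definition maps_none_onto :: "nat \<Rightarrow> (nat \<Rightarrow> 'a set) \<Rightarrow> (nat \<Rightarrow> 'b set) \<Rightarrow> ('a \<times> 'b) set \<Rightarrow> bool" where
  "maps_none_onto k AA BB R \<longleftrightarrow> (\<forall>i\<in>{1..k}. \<not> (AA i \<subseteq> Domain R \<and> R `` AA i = BB i))"

lemma maps_none_onto_subset:
  assumes "R \<subseteq> R'" "inj_on fst R'" "maps_none_onto k AA BB R'"
  shows "maps_none_onto k AA BB R"
  unfolding maps_none_onto_def
proof (intro ballI notI)
  fix i assume i: "i \<in> {1..k}" and onto: "AA i \<subseteq> Domain R \<and> R `` AA i = BB i"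
  have "R' `` AA i \<subseteq> R `` AA i"
  proof
    fix y assume "y \<in> R' `` AA i"
    then obtain x where x: "x \<in> AA i" "(x, y) \<in> R'" by blast
    then obtain y' where "(x, y') \<in> R" using onto by blast
    moreover have "y' = y"
      using inj_onD[OF assms(2), of "(x, y')" "(x, y)"] x \<open>(x, y') \<in> R\<close> assms(1) by auto
    ultimately show "y \<in> R `` AA i" using x by blast
  qed
  then have "AA i \<subseteq> Domain R' \<and> R' `` AA i = BB i" using onto assms(1) by blast
  then show False using assms(3) i unfolding maps_none_onto_def by blast
qed

lemma image_eq_iff_matched_part:
  assumes "S \<subseteq> A'" "T \<subseteq> B'"
  shows "\<sigma> ` S = T \<longleftrightarrow> S \<subseteq> Domain (matched_part A' B' \<sigma>) \<and> matched_part A' B' \<sigma> `` S = T"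
proof -
  have dom: "Domain (matched_part A' B' \<sigma>) = {x \<in> A'. \<sigma> x \<in> B'}"
    and img: "matched_part A' B' \<sigma> `` S = \<sigma> ` (S \<inter> {x \<in> A'. \<sigma> x \<in> B'})"
    unfolding matched_part_def by force+
  have "S \<subseteq> {x \<in> A'. \<sigma> x \<in> B'}" if "\<sigma> ` S = T" using that assms by auto
  then show ?thesis unfolding dom img by (auto simp: Int_absorb2)
qed

lemma matched_part_eq_iff:
  assumes "R \<subseteq> A' \<times> B'"
  shows "matched_part A' B' \<sigma> = R \<longleftrightarrow>
    (\<forall>(x, y)\<in>R. \<sigma> x = y) \<and> (\<forall>x\<in>A' - Domain R. \<sigma> x \<notin> B')"
  using assms unfolding matched_part_def by (auto 4 3)

lemma matched_part_in_partial_matchings: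
  assumes fin: "finite A'" and inj: "inj_on \<sigma> A'"
  shows "matched_part A' B' \<sigma> \<in> partial_matchings A' B' (card A' - card (\<sigma> ` A' - B'))"
proof -
  let ?M = "{x \<in> A'. \<sigma> x \<in> B'}"
  have graph: "matched_part A' B' \<sigma> = (\<lambda>x. (x, \<sigma> x)) ` ?M" by (auto simp: matched_part_def)
  have "card (\<sigma> ` A' - B') = card (\<sigma> ` (A' - ?M))" by (rule arg_cong[of _ _ card]) auto
  also have "\<dots> = card A' - card ?M"
    using inj fin by (simp add: card_image inj_on_subset card_Diff_subset)
  finally have "card ?M = card A' - card (\<sigma> ` A' - B')"
    using card_mono[OF fin, of ?M] by auto
  moreover have "card (matched_part A' B' \<sigma>) = card ?M"
    unfolding graph by (rule card_image) (auto simp: inj_on_def)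
  moreover have "inj_on snd (matched_part A' B' \<sigma>)"
    unfolding graph using inj by (auto simp: inj_on_def)
  ultimately show ?thesis
    unfolding partial_matchings_def graph by (auto simp: inj_on_def)
qed

lemma card_image_Diff_eq_iff_matched_part:
  assumes "finite A'" "inj_on \<sigma> A'" "t \<le> card A'"
  shows "card (\<sigma> ` A' - B') = t \<longleftrightarrow>
    matched_part A' B' \<sigma> \<in> partial_matchings A' B' (card A' - t)"
  using matched_part_in_partial_matchings[OF assms(1,2), of B']
    card_image_Diff_le[OF assms(1), of \<sigma> B'] assms(3)
  by (auto simp: partial_matchings_def)

context
  fixes A :: "'a set" and B :: "'b set" and A' :: "'a set" and B' :: "'b set"
  assumes finite_A: "finite A" and finite_B: "finite B" and card_eq: "card A = card B"
    and A'_sub: "A' \<subseteq> A" and B'_sub: "B' \<subseteq> B"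
begin

lemma finite_A': "finite A'"
  using finite_A A'_sub by (rule finite_subset[rotated])

lemma inj_on_A'_if_bijection: "\<sigma> \<in> bijections A B \<Longrightarrow> inj_on \<sigma> A'"
  using A'_sub by (auto simp: bijections_def bij_betw_def intro: inj_on_subset)

lemma partial_matchings_nonempty_if_prob_pos:
  assumes "measure_pmf.prob (unif_bij A B) {\<sigma>. card (\<sigma> ` A' - B') = t} > 0"
  shows "partial_matchings A' B' (card A' - t) \<noteq> {}"
  using bijection_exists_if_prob_pos[OF finite_A finite_B card_eq assms]
    matched_part_in_partial_matchings[OF finite_A' inj_on_A'_if_bijection] by blast

text \<open>A bijection with matched part R agrees with R on its domain, maps the rest of A' into
  B - B', and is otherwise an arbitrary injection.\<close>

lemma card_matched_part_fibre:
  assumes R: "R \<in> partial_matchings A' B' m"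
  shows "card {\<sigma> \<in> bijections A B. matched_part A' B' \<sigma> = R}
       = (\<Prod>i<card A - card A'. card B - card A' - i) * (\<Prod>i<card A' - m. card B - card B' - i)"
proof -
  have R_sub: "R \<subseteq> A' \<times> B'" and inj_fst: "inj_on fst R" and inj_snd: "inj_on snd R"
    and card_R: "card R = m"
    using R by (auto simp: partial_matchings_def)
  define \<tau> where "\<tau> x = (THE y. (x, y) \<in> R)" for x
  have \<tau>: "\<tau> x = y" if "(x, y) \<in> R" for x y
    unfolding \<tau>_def
  proof (rule the_equality)
    fix y' assume "(x, y') \<in> R"
    then show "y' = y" using inj_onD[OF inj_fst, of "(x, y')" "(x, y)"] that by auto
  qed (fact that)
  have \<tau>_image: "\<tau> ` Domain R = Range R"
  proof (intro equalityI subsetI)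
    fix y assume "y \<in> \<tau> ` Domain R"
    then obtain x y' where "(x, y') \<in> R" "y = \<tau> x" by blast
    then show "y \<in> Range R" using \<tau> by blast
  next
    fix y assume "y \<in> Range R"
    then obtain x where "(x, y) \<in> R" by blast
    then show "y \<in> \<tau> ` Domain R" using \<tau> by (metis Domain.intros image_eqI)
  qed
  have \<tau>_inj: "inj_on \<tau> (Domain R)"
  proof (rule inj_onI)
    fix x x' assume "x \<in> Domain R" "x' \<in> Domain R" "\<tau> x = \<tau> x'"
    then obtain y y' where xy: "(x, y) \<in> R" "(x', y') \<in> R" and "\<tau> x = \<tau> x'" by blast
    then have "y = y'" using \<tau> by simp
    then show "x = x'" using inj_onD[OF inj_snd, of "(x, y)" "(x', y')"] xy by simp
  qed
  have agree_iff: "(\<forall>(x, y)\<in>R. f x = y) \<longleftrightarrow> (\<forall>x\<in>Domain R. f x = \<tau> x)" for f :: "'a \<Rightarrow> 'b"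
  proof
    assume "\<forall>(x, y)\<in>R. f x = y"
    then show "\<forall>x\<in>Domain R. f x = \<tau> x" using \<tau> by auto
  next
    assume "\<forall>x\<in>Domain R. f x = \<tau> x"
    then show "\<forall>(x, y)\<in>R. f x = y" using \<tau> by auto
  qed
  have avoid_iff: "(\<forall>x\<in>A' - Domain R. f x \<notin> B') \<longleftrightarrow> f ` (A' - Domain R) \<subseteq> B - B'"
    if "f \<in> A \<rightarrow>\<^sub>E B" for f
    using that A'_sub by (auto simp: PiE_def Pi_def)
  have "{\<sigma> \<in> bijections A B. matched_part A' B' \<sigma> = R}
      = {f \<in> A \<rightarrow>\<^sub>E B. inj_on f A \<and> (\<forall>x\<in>Domain R. f x = \<tau> x) \<and> f ` (A' - Domain R) \<subseteq> B - B'}"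
    unfolding bijections_eq_inj_funcset[OF finite_A finite_B card_eq]
      matched_part_eq_iff[OF R_sub] agree_iff
    using avoid_iff by auto
  also have "card \<dots> = (\<Prod>i<card (A - A'). card B - card A' - i)
      * (\<Prod>i<card (A' - Domain R). card (B - B') - i)"
    using finite_A finite_B A'_sub B'_sub R_sub \<tau>_inj
    by (intro card_injective_extensions_two_stage) (auto simp: \<tau>_image)
  also have "card (A - A') = card A - card A'"
    using finite_A' A'_sub by (rule card_Diff_subset)
  also have "card (A' - Domain R) = card A' - m"
  proof -
    have "Domain R \<subseteq> A'" using R_sub by auto
    with card_Domain_Range_partial_matching(1)[OF R] show ?thesis
      using finite_A' by (simp add: card_Diff_subset finite_subset)
  qed
  also have "card (B - B') = card B - card B'"
    using B'_sub finite_B by (simp add: card_Diff_subset finite_subset)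
  finally show ?thesis .
qed

lemma card_bijections_matched_part_in:
  assumes "Y \<subseteq> partial_matchings A' B' m"
  shows "card {\<sigma> \<in> bijections A B. matched_part A' B' \<sigma> \<in> Y}
       = (\<Prod>i<card A - card A'. card B - card A' - i) * (\<Prod>i<card A' - m. card B - card B' - i) * card Y"
proof (rule card_eq_mult_card_if_uniform_fibres)
  show "finite {\<sigma> \<in> bijections A B. matched_part A' B' \<sigma> \<in> Y}"
    using finite_bijections[OF finite_A finite_B] by simp
  show "finite Y"
    using assms finite_partial_matchings finite_A finite_B A'_sub B'_sub
    by (meson finite_subset)
  show "card {\<sigma> \<in> {\<sigma> \<in> bijections A B. matched_part A' B' \<sigma> \<in> Y}. matched_part A' B' \<sigma> = R}
       = (\<Prod>i<card A - card A'. card B - card A' - i) * (\<Prod>i<card A' - m. card B - card B' - i)"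
    if "R \<in> Y" for R
  proof -
    have "{\<sigma> \<in> {\<sigma> \<in> bijections A B. matched_part A' B' \<sigma> \<in> Y}. matched_part A' B' \<sigma> = R}
        = {\<sigma> \<in> bijections A B. matched_part A' B' \<sigma> = R}"
      using that by auto
    then show ?thesis using card_matched_part_fibre[of R m] that assms by auto
  qed
qed auto

lemma cond_prob_eq_matching_density:
  assumes "\<And>i. i \<in> {1..k} \<Longrightarrow> AA i \<subseteq> A'" "\<And>i. i \<in> {1..k} \<Longrightarrow> BB i \<subseteq> B'"
    and pos: "measure_pmf.prob (unif_bij A B) {\<sigma>. card (\<sigma> ` A' - B') = t} > 0"
  shows "cond_prob (unif_bij A B) {\<sigma>. \<forall>i\<in>{1..k}. \<sigma> ` AA i \<noteq> BB i} {\<sigma>. card (\<sigma> ` A' - B') = t}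
     = card {R \<in> partial_matchings A' B' (card A' - t). maps_none_onto k AA BB R}
       / card (partial_matchings A' B' (card A' - t))"
proof -
  define m where "m = card A' - t"
  define F where "F = (\<Prod>i<card A - card A'. card B - card A' - i) * (\<Prod>i<card A' - m. card B - card B' - i)"
  let ?E = "{\<sigma>. \<forall>i\<in>{1..k}. \<sigma> ` AA i \<noteq> BB i}" and ?C = "{\<sigma>. card (\<sigma> ` A' - B') = t}"
  obtain \<sigma>\<^sub>0 where \<sigma>\<^sub>0: "\<sigma>\<^sub>0 \<in> bijections A B \<inter> ?C"
    using bijection_exists_if_prob_pos[OF finite_A finite_B card_eq pos] by blast
  then have "t \<le> card A'" using card_image_Diff_le[OF finite_A'] by auto
  then have C: "bijections A B \<inter> ?C
      = {\<sigma> \<in> bijections A B. matched_part A' B' \<sigma> \<in> partial_matchings A' B' m}"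
    using card_image_Diff_eq_iff_matched_part[OF finite_A' inj_on_A'_if_bijection]
    by (auto simp: m_def)
  have E: "(\<sigma> \<in> ?E) = maps_none_onto k AA BB (matched_part A' B' \<sigma>)" for \<sigma>
    using image_eq_iff_matched_part[OF assms(1,2)] by (auto simp: maps_none_onto_def)
  have EC: "bijections A B \<inter> ?E \<inter> ?C = {\<sigma> \<in> bijections A B.
      matched_part A' B' \<sigma> \<in> {R \<in> partial_matchings A' B' m. maps_none_onto k AA BB R}}"
    using C E by blast
  have card_C: "card (bijections A B \<inter> ?C) = F * card (partial_matchings A' B' m)"
    unfolding C F_def by (rule card_bijections_matched_part_in) simp
  have card_EC: "card (bijections A B \<inter> ?E \<inter> ?C)
      = F * card {R \<in> partial_matchings A' B' m. maps_none_onto k AA BB R}"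
    unfolding EC F_def by (rule card_bijections_matched_part_in) simp
  have "card (bijections A B \<inter> ?C) > 0"
    using \<sigma>\<^sub>0 finite_bijections[OF finite_A finite_B] by (auto simp: card_gt_0_iff)
  then have "F > 0" using card_C by simp
  then show ?thesis
    unfolding unif_bij_def
      cond_prob_pmf_of_set[OF finite_bijections[OF finite_A finite_B]
        bijections_nonempty[OF finite_A finite_B card_eq]]
      card_C card_EC m_def[symmetric]
    by simp
qed

end

theorem lemma4:
  fixes A :: "'a set" and B :: "'b set" and r k :: nat
    and A' :: "'a set" and B' :: "'b set"
    and AA :: "nat \<Rightarrow> 'a set" and BB :: "nat \<Rightarrow> 'b set"
  assumes "finite A" "finite B" "card A = r" "card B = r"
    and "A' \<subseteq> A" "B' \<subseteq> B"
    and "\<And>i. i \<in> {1..k} \<Longrightarrow> AA i \<subseteq> A'"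
    and "\<And>i. i \<in> {1..k} \<Longrightarrow> BB i \<subseteq> B'"
    and "(t1::nat) \<le> t2"
    and "measure_pmf.prob (unif_bij A B) {\<sigma>. card (\<sigma> ` A' - B') = t1} > 0"
    and "measure_pmf.prob (unif_bij A B) {\<sigma>. card (\<sigma> ` A' - B') = t2} > 0"
  shows "cond_prob (unif_bij A B) {\<sigma>. \<forall>i\<in>{1..k}. \<sigma> ` AA i \<noteq> BB i}
                                 {\<sigma>. card (\<sigma> ` A' - B') = t1}
       \<le> cond_prob (unif_bij A B) {\<sigma>. \<forall>i\<in>{1..k}. \<sigma> ` AA i \<noteq> BB i}
                                 {\<sigma>. card (\<sigma> ` A' - B') = t2}"
proof -
  have card_eq: "card A = card B" using assms(3,4) by simp
  have "finite A'" "finite B'" using assms(1,2,5,6) by (auto intro: finite_subset)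
  moreover have "card A' - t2 \<le> card A' - t1" using assms(9) by simp
  moreover have "partial_matchings A' B' (card A' - t1) \<noteq> {}"
    using partial_matchings_nonempty_if_prob_pos[OF assms(1,2) card_eq assms(5,6,10)] .
  ultimately have "card {R \<in> partial_matchings A' B' (card A' - t1). maps_none_onto k AA BB R}
        / card (partial_matchings A' B' (card A' - t1))
      \<le> card {R \<in> partial_matchings A' B' (card A' - t2). maps_none_onto k AA BB R}
        / real (card (partial_matchings A' B' (card A' - t2)))"
    using maps_none_onto_subset by (rule matching_density_antimono)
  then show ?thesis
    using cond_prob_eq_matching_density[OF assms(1,2) card_eq assms(5-8)] assms(10,11) by simp
qed

end
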